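(* Let $R$ be a $\star$-ring and equip the formal power series ring $R[[x]]$ with the involution $\left(\sum_{i\ge0}a_ix^i\right)^\star=\sum_{i\ge0}a_i^\star x^i$. Then $R[[x]]$ is weakly $\star$-clean if and only if $R$ is weakly $\star$-clean.
   Context: Rings are associative with identity. A $\star$-ring is a ring with a map $\star$ satisfying $(x+y)^\star=x^\star+y^\star$, $(xy)^\star=y^\star x^\star$, $(x^\star)^\star=x$. A projection is $p$ with $p^2=p=p^\star$; $P(R)$ is the set of projections, $U(R)$ the units. An element $x$ is weakly $\star$-clean if $x=u+p$ or $x=u-p$ with $u\in U(R)$, $p\in P(R)$; $R$ is weakly $\star$-clean if all its elements are. *)

theory Defs
  imports "HOL-Computational_Algebra.Formal_Power_Series"
begin

definition star_ring :: "('a::ring_1 \<Rightarrow> 'a) \<Rightarrow> bool" where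
  "star_ring s \<longleftrightarrow>
     (\<forall>x y. s (x + y) = s x + s y) \<and>
     (\<forall>x y. s (x * y) = s y * s x) \<and>
     (\<forall>x. s (s x) = x)"

definition ring_unit :: "'a::ring_1 \<Rightarrow> bool" where
  "ring_unit u \<longleftrightarrow> (\<exists>v. u * v = 1 \<and> v * u = 1)"

definition projection :: "('a::ring_1 \<Rightarrow> 'a) \<Rightarrow> 'a \<Rightarrow> bool" where
  "projection s p \<longleftrightarrow> p * p = p \<and> s p = p"

definition weakly_star_clean_elem :: "('a::ring_1 \<Rightarrow> 'a) \<Rightarrow> 'a \<Rightarrow> bool" where
  "weakly_star_clean_elem s x \<longleftrightarrow>
     (\<exists>u p. ring_unit u \<and> projection s p \<and> (x = u + p \<or> x = u - p))"

definition weakly_star_clean :: "('a::ring_1 \<Rightarrow> 'a) \<Rightarrow> bool" where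
  "weakly_star_clean s \<longleftrightarrow> (\<forall>x. weakly_star_clean_elem s x)"

definition fps_star :: "('a::ring_1 \<Rightarrow> 'a) \<Rightarrow> 'a fps \<Rightarrow> 'a fps" where
  "fps_star s f = Abs_fps (\<lambda>i. s (fps_nth f i))"

end

theory Submission
  imports Defs
begin

unbundle fps_syntax

text \<open>Both the unit group and the projections of \<open>R[[x]]\<close> are controlled by constant terms:
  a power series is a unit iff its constant term is (the inverse is built coefficient by
  coefficient), every projection of \<open>R\<close> stays a projection as a constant series, and taking
  constant terms is a ring homomorphism commuting with the involution. Hence \<open>f\<close> is weakly
  \<open>\<star>\<close>-clean in \<open>R[[x]]\<close> iff \<open>f $ 0\<close> is weakly \<open>\<star>\<close>-clean in \<open>R\<close>, and the constant series
  show that every element of \<open>R\<close> arises this way.\<close>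

text \<open>Coefficient \<open>n > 0\<close> of \<open>f * g = 1\<close> (resp. \<open>g * f = 1\<close>), with \<open>g $ 0 = c\<close>, solved for \<open>g $ n\<close>
  using that \<open>c\<close> is a right (resp. left) inverse of \<open>f $ 0\<close>.\<close>

fun right_inverse_coeff :: "'a::ring_1 fps \<Rightarrow> 'a \<Rightarrow> nat \<Rightarrow> 'a" where
  "right_inverse_coeff f c n =
     (if n = 0 then c else - c * (\<Sum>i<n. f $ (n - i) * right_inverse_coeff f c i))"

fun left_inverse_coeff :: "'a::ring_1 fps \<Rightarrow> 'a \<Rightarrow> nat \<Rightarrow> 'a" where
  "left_inverse_coeff f c n =
     (if n = 0 then c else - (\<Sum>i<n. left_inverse_coeff f c i * f $ (n - i)) * c)"

declare right_inverse_coeff.simps [simp del] left_inverse_coeff.simps [simp del]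

lemma fps_mult_right_inverse_coeff:
  fixes f :: "'a::ring_1 fps"
  assumes "f $ 0 * c = 1"
  shows "f * Abs_fps (right_inverse_coeff f c) = 1"
proof (rule fps_ext)
  fix n
  let ?g = "right_inverse_coeff f c"
  show "(f * Abs_fps ?g) $ n = 1 $ n"
  proof (cases "n = 0")
    case True
    then show ?thesis
      using assms by (simp add: right_inverse_coeff.simps)
  next
    case False
    have reindex: "(\<Sum>i\<in>{1..n}. f $ i * ?g (n - i)) = (\<Sum>i<n. f $ (n - i) * ?g i)"
      by (rule sum.reindex_bij_witness[where i="\<lambda>j. n - j" and j="\<lambda>i. n - i"]) auto
    have "(f * Abs_fps ?g) $ n = f $ 0 * ?g n + (\<Sum>i\<in>{1..n}. f $ i * ?g (n - i))"
      by (simp add: fps_mult_nth sum.atLeast_Suc_atMost)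
    also have "f $ 0 * ?g n = - (f $ 0 * c) * (\<Sum>i<n. f $ (n - i) * ?g i)"
      using False by (simp add: right_inverse_coeff.simps[of f c n] mult.assoc)
    finally show ?thesis
      using False assms reindex by simp
  qed
qed

lemma fps_mult_left_inverse_coeff:
  fixes f :: "'a::ring_1 fps"
  assumes "c * f $ 0 = 1"
  shows "Abs_fps (left_inverse_coeff f c) * f = 1"
proof (rule fps_ext)
  fix n
  let ?g = "left_inverse_coeff f c"
  show "(Abs_fps ?g * f) $ n = 1 $ n"
  proof (cases "n = 0")
    case True
    then show ?thesis
      using assms by (simp add: left_inverse_coeff.simps)
  next
    case False
    have "(Abs_fps ?g * f) $ n = (\<Sum>i<n. ?g i * f $ (n - i)) + ?g n * f $ 0"
      by (simp add: fps_mult_nth atLeast0AtMost lessThan_Suc_atMost[symmetric])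
    also have "?g n * f $ 0 = - (\<Sum>i<n. ?g i * f $ (n - i)) * (c * f $ 0)"
      using False by (simp add: left_inverse_coeff.simps[of f c n] mult.assoc)
    finally show ?thesis
      using False assms by simp
  qed
qed

lemma ring_unit_fps_iff: "ring_unit f \<longleftrightarrow> ring_unit (f $ 0)"
  for f :: "'a::ring_1 fps"
proof
  assume "ring_unit f"
  then show "ring_unit (f $ 0)"
    unfolding ring_unit_def by (metis fps_mult_nth_0 fps_one_nth)
next
  assume "ring_unit (f $ 0)"
  then obtain c where c: "f $ 0 * c = 1" "c * f $ 0 = 1"
    unfolding ring_unit_def by blast
  define g where "g = Abs_fps (right_inverse_coeff f c)"
  define h where "h = Abs_fps (left_inverse_coeff f c)"
  have fg: "f * g = 1" and hf: "h * f = 1"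
    using fps_mult_right_inverse_coeff[OF c(1)] fps_mult_left_inverse_coeff[OF c(2)]
    by (simp_all add: g_def h_def)
  then have "h = g"
    by (metis mult.assoc mult_1_left mult_1_right)
  with fg hf show "ring_unit f"
    unfolding ring_unit_def by blast
qed

lemma star_ring_zero: "star_ring s \<Longrightarrow> s 0 = 0"
  unfolding star_ring_def by (metis add_cancel_right_right)

lemma fps_star_nth [simp]: "fps_star s f $ n = s (f $ n)"
  by (simp add: fps_star_def)

lemma projection_fps_star_nth_0:
  "projection (fps_star s) p \<Longrightarrow> projection s (p $ 0)"
  unfolding projection_def by (metis fps_mult_nth_0 fps_star_nth)

lemma projection_fps_star_fps_const:
  assumes "star_ring s" and "projection s p"
  shows "projection (fps_star s) (fps_const p)"
  using assms star_ring_zero[OF assms(1)]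
  unfolding projection_def by (auto intro: fps_ext simp: fps_const_mult[symmetric])

lemma weakly_star_clean_elem_fps_iff:
  assumes "star_ring s"
  shows "weakly_star_clean_elem (fps_star s) f \<longleftrightarrow> weakly_star_clean_elem s (f $ 0)"
proof
  assume "weakly_star_clean_elem (fps_star s) f"
  then obtain u p where "ring_unit u" "projection (fps_star s) p" "f = u + p \<or> f = u - p"
    unfolding weakly_star_clean_elem_def by blast
  then have "ring_unit (u $ 0)" "projection s (p $ 0)" "f $ 0 = u $ 0 + p $ 0 \<or> f $ 0 = u $ 0 - p $ 0"
    by (auto simp: ring_unit_fps_iff projection_fps_star_nth_0)
  then show "weakly_star_clean_elem s (f $ 0)"
    unfolding weakly_star_clean_elem_def by blast
next
  assume "weakly_star_clean_elem s (f $ 0)"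
  then obtain u p where u: "ring_unit u" and p: "projection s p" and "f $ 0 = u + p \<or> f $ 0 = u - p"
    unfolding weakly_star_clean_elem_def by blast
  then have "ring_unit (f - fps_const p) \<and> f = (f - fps_const p) + fps_const p
           \<or> ring_unit (f + fps_const p) \<and> f = (f + fps_const p) - fps_const p"
    by (auto simp: ring_unit_fps_iff)
  with projection_fps_star_fps_const[OF assms p] show "weakly_star_clean_elem (fps_star s) f"
    unfolding weakly_star_clean_elem_def by blast
qed

theorem proposition4p9:
  fixes s :: "'a::ring_1 \<Rightarrow> 'a"
  assumes "star_ring s"
  shows "weakly_star_clean (fps_star s) \<longleftrightarrow> weakly_star_clean s"
  unfolding weakly_star_clean_def weakly_star_clean_elem_fps_iff[OF assms]
  by (metis fps_nth_fps_const)

end
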